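(* Let $n,m,p,N\in\mathbb{N}_+$, $B\in\mathbb{R}^{n\times m}$, $C\in\mathbb{R}^{p\times n}$ of full column rank, $x_0\in\mathbb{R}^n$, $r_1,\dots,r_N\in\mathbb{R}^p$, $r_0:=Cx_0$, and $\mathcal{S}_{\rm M1}\subseteq\mathbb{R}^{n\times n}\times\mathbb{R}^{m\times N}$. Let $v^*_{\rm A1}$ be the optimal value (infimum) of problem (AMOPUL1): minimize $\sum_{t=1}^N\|CAC^{\dagger}r_{t-1}+CBu_{t-1}-r_t\|_2$ over $(A,U)\in\mathcal{S}_{\rm M1}$, $U=(u_0,\dots,u_{N-1})$. Let $\epsilon_1,\dots,\epsilon_N\ge0$ and $$\mathcal{Z}_\epsilon:=\{(A,U)\in\mathcal{S}_{\rm M1}:\ \hat y_0=Cx_0,\ \hat y_t=CAC^{\dagger}\hat y_{t-1}+CBu_{t-1},\ \|\hat y_t-r_t\|_2\le\epsilon_t,\ t=1,\dots,N\}.$$ If $\mathcal{Z}_\epsilon\ne\emptyset$, then $$v^*_{\rm A1}\le(1+\gamma)\sum_{t=1}^{N-1}\epsilon_t+\epsilon_N,\qquad \gamma:=\inf_{(A,U)\in\mathcal{Z}_\epsilon}\|CAC^{\dagger}\|_2.$$ Moreover, if there exists $(A,U)\in\mathcal{S}_{\rm M1}$ such that the sequence defined by $\hat y_0=Cx_0$, $\hat y_t=CAC^{\dagger}\hat y_{t-1}+CBu_{t-1}$ satisfies $\hat y_t=r_t$ for $t=1,\dots,N$, then $v^*_{\rm A1}=0$.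
   Context: $C^{\dagger}$ is the Moore–Penrose inverse of $C$; $\|\cdot\|_2$ is the Euclidean norm for vectors and the spectral norm for matrices. In the paper $\mathcal{S}_{\rm M1}$ is assumed SD representable, though this is not used in the claim. *)

theory Defs
  imports "HOL-Analysis.Analysis"
begin

definition is_mp_inverse :: "real^'n^'p \<Rightarrow> real^'p^'n \<Rightarrow> bool" where
  "is_mp_inverse C X \<longleftrightarrow>
     C ** X ** C = C \<and> X ** C ** X = X \<and>
     transpose (C ** X) = C ** X \<and> transpose (X ** C) = X ** C"

definition mp_inverse :: "real^'n^'p \<Rightarrow> real^'p^'n" where
  "mp_inverse C = (THE X. is_mp_inverse C X)"

definition spec_norm :: "real^'n^'m \<Rightarrow> real" where
  "spec_norm M = onorm (\<lambda>x. M *v x)"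

fun yhat :: "real^'n^'p \<Rightarrow> real^'m^'n \<Rightarrow> real^'n \<Rightarrow> real^'n^'n \<Rightarrow> (nat \<Rightarrow> real^'m) \<Rightarrow> nat \<Rightarrow> real^'p" where
  "yhat C B x0 A U 0 = C *v x0"
| "yhat C B x0 A U (Suc t) =
     (C ** A ** mp_inverse C) *v yhat C B x0 A U t + (C ** B) *v U t"

definition amopul1_obj :: "real^'n^'p \<Rightarrow> real^'m^'n \<Rightarrow> (nat \<Rightarrow> real^'p) \<Rightarrow> nat \<Rightarrow> real^'n^'n \<Rightarrow> (nat \<Rightarrow> real^'m) \<Rightarrow> real" where
  "amopul1_obj C B r N A U =
     (\<Sum>t=1..N. norm ((C ** A ** mp_inverse C) *v r (t - 1) + (C ** B) *v U (t - 1) - r t))"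

end

theory Submission
  imports Defs
begin

text \<open>Write \<open>M = C A C\<^sup>+\<close> and \<open>e\<^sub>t = yhat\<^sub>t - r\<^sub>t\<close>. The residual
  \<open>M r\<^sub>t + C B u\<^sub>t - r\<^sub>t\<^sub>+\<^sub>1\<close> of the objective equals \<open>e\<^sub>t\<^sub>+\<^sub>1 - M e\<^sub>t\<close>, and \<open>e\<^sub>0 = 0\<close> because
  \<open>r\<^sub>0 = C x\<^sub>0\<close>. The triangle inequality and \<open>|M v| \<le> |M|\<^sub>2 |v|\<close> therefore bound the
  objective at every point of \<open>Z\<close> by \<open>(1 + |M|\<^sub>2) (\<epsilon>\<^sub>1 + \<dots> + \<epsilon>\<^sub>N\<^sub>-\<^sub>1) + \<epsilon>\<^sub>N\<close>; taking the
  infimum over \<open>Z\<close> gives the first claim, and \<open>\<epsilon> = 0\<close> the second.\<close>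

lemma spec_norm_mult_le: "norm (M *v x) \<le> spec_norm M * norm x"
  for M :: "real^'n^'m"
  unfolding spec_norm_def using onorm[OF matrix_vector_mul_bounded_linear] by blast

lemma spec_norm_nonneg: "0 \<le> spec_norm (M :: real^'n^'m)"
  unfolding spec_norm_def using onorm_pos_le[OF matrix_vector_mul_bounded_linear] by blast

lemma amopul1_obj_nonneg: "0 \<le> amopul1_obj C B r N A U"
  unfolding amopul1_obj_def by (simp add: sum_nonneg)

lemma amopul1_residual_eq:
  "(C ** A ** mp_inverse C) *v r t + (C ** B) *v U t - r (Suc t)
     = (yhat C B x0 A U (Suc t) - r (Suc t)) + (C ** A ** mp_inverse C) *v (r t - yhat C B x0 A U t)"
  by (simp add: matrix_vector_right_distrib algebra_simps)

lemma amopul1_obj_le_tracking_errors: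
  fixes B :: "real^'m^'n" and C :: "real^'n^'p" and x0 :: "real^'n"
  shows "amopul1_obj C B r N A U
    \<le> (\<Sum>t=1..N. norm (yhat C B x0 A U t - r t))
      + spec_norm (C ** A ** mp_inverse C) * (\<Sum>t<N. norm (yhat C B x0 A U t - r t))"
proof -
  let ?M = "C ** A ** mp_inverse C"
  let ?e = "\<lambda>t. norm (yhat C B x0 A U t - r t)"
  have step: "norm (?M *v r t + (C ** B) *v U t - r (Suc t)) \<le> ?e (Suc t) + spec_norm ?M * ?e t" for t
  proof -
    have "norm (?M *v r t + (C ** B) *v U t - r (Suc t))
        \<le> ?e (Suc t) + norm (?M *v (r t - yhat C B x0 A U t))"
      unfolding amopul1_residual_eq[of C A r t B U x0] by (rule norm_triangle_ineq)
    also have "norm (?M *v (r t - yhat C B x0 A U t)) \<le> spec_norm ?M * ?e t"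
      using spec_norm_mult_le[of ?M] by (simp add: norm_minus_commute)
    finally show ?thesis by simp
  qed
  have "amopul1_obj C B r N A U = (\<Sum>t<N. norm (?M *v r t + (C ** B) *v U t - r (Suc t)))"
    unfolding amopul1_obj_def by (simp add: sum.atLeast1_atMost_eq)
  also have "\<dots> \<le> (\<Sum>t<N. ?e (Suc t) + spec_norm ?M * ?e t)"
    by (intro sum_mono step)
  also have "\<dots> = (\<Sum>t=1..N. ?e t) + spec_norm ?M * (\<Sum>t<N. ?e t)"
    by (simp add: sum.distrib sum_distrib_left sum.atLeast1_atMost_eq)
  finally show ?thesis .
qed

lemma amopul1_obj_le_error_bounds:
  fixes B :: "real^'m^'n" and C :: "real^'n^'p" and x0 :: "real^'n"
  assumes "N \<ge> 1" and "r 0 = C *v x0"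
    and err: "\<forall>t\<in>{1..N}. norm (yhat C B x0 A U t - r t) \<le> eps t"
  shows "amopul1_obj C B r N A U
    \<le> (1 + spec_norm (C ** A ** mp_inverse C)) * (\<Sum>t=1..N-1. eps t) + eps N"
proof -
  let ?s = "spec_norm (C ** A ** mp_inverse C)"
  let ?e = "\<lambda>t. norm (yhat C B x0 A U t - r t)"
  obtain n where N: "N = Suc n" using \<open>N \<ge> 1\<close> by (cases N) auto
  have "(\<Sum>t<N. ?e t) = (\<Sum>t=1..n. ?e t)"
    unfolding N sum.lessThan_Suc_shift using \<open>r 0 = C *v x0\<close>
    by (simp add: sum.atLeast1_atMost_eq del: yhat.simps(2))
  moreover have "(\<Sum>t=1..N. ?e t) = (\<Sum>t=1..n. ?e t) + ?e N"
    by (simp add: N)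
  ultimately have "amopul1_obj C B r N A U \<le> (1 + ?s) * (\<Sum>t=1..n. ?e t) + ?e N"
    using amopul1_obj_le_tracking_errors[of C B r N A U x0] by (simp add: algebra_simps)
  also have "\<dots> \<le> (1 + ?s) * (\<Sum>t=1..n. eps t) + eps N"
  proof (intro add_mono mult_left_mono sum_mono)
    show "?e t \<le> eps t" if "t \<in> {1..n}" for t
      using err that by (simp add: N)
    show "?e N \<le> eps N" using err \<open>N \<ge> 1\<close> by auto
    show "0 \<le> 1 + ?s" using spec_norm_nonneg[of "C ** A ** mp_inverse C"] by simp
  qed
  finally show ?thesis by (simp add: N)
qed

lemma le_affine_Inf:
  fixes f :: "'a \<Rightarrow> real"
  assumes "Z \<noteq> {}" and "0 \<le> E" and le: "\<And>z. z \<in> Z \<Longrightarrow> v \<le> (a + f z) * E + c"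
  shows "v \<le> (a + Inf (f ` Z)) * E + c"
proof (cases "E = 0")
  case True
  then show ?thesis using \<open>Z \<noteq> {}\<close> le by auto
next
  case False
  with \<open>0 \<le> E\<close> have "E > 0" by simp
  have "(v - c) / E - a \<le> f z" if "z \<in> Z" for z
  proof -
    have "v - c \<le> (a + f z) * E" using le[OF that] by simp
    with \<open>E > 0\<close> have "(v - c) / E \<le> a + f z" by (simp add: pos_divide_le_eq)
    then show ?thesis by simp
  qed
  then have "(v - c) / E - a \<le> Inf (f ` Z)"
    using \<open>Z \<noteq> {}\<close> by (intro cInf_greatest) auto
  then have "(v - c) / E \<le> a + Inf (f ` Z)" by simp
  with \<open>E > 0\<close> have "v - c \<le> (a + Inf (f ` Z)) * E" by (simp add: pos_divide_le_eq)
  then show ?thesis by simp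
qed

theorem theorem4:
  fixes B :: "real^'m^'n" and C :: "real^'n^'p" and x0 :: "real^'n"
    and r :: "nat \<Rightarrow> real^'p" and N :: nat
    and S :: "((real^'n^'n) \<times> (nat \<Rightarrow> real^'m)) set"
    and eps :: "nat \<Rightarrow> real"
  assumes "N \<ge> 1"
    and "rank C = CARD('n)"
    and "r 0 = C *v x0"
    and "\<forall>t\<in>{1..N}. eps t \<ge> 0"
  defines "v \<equiv> Inf ((\<lambda>(A, U). amopul1_obj C B r N A U) ` S)"
    and "Z \<equiv> {(A, U) \<in> S. \<forall>t\<in>{1..N}. norm (yhat C B x0 A U t - r t) \<le> eps t}"
  shows "(Z \<noteq> {} \<longrightarrow>
           v \<le> (1 + Inf ((\<lambda>(A, U). spec_norm (C ** A ** mp_inverse C)) ` Z)) * (\<Sum>t=1..N-1. eps t) + eps N)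
       \<and> ((\<exists>(A, U)\<in>S. \<forall>t\<in>{1..N}. yhat C B x0 A U t = r t) \<longrightarrow> v = 0)"
proof -
  have v_le: "v \<le> amopul1_obj C B r N A U" if "(A, U) \<in> S" for A U
    unfolding v_def using that
    by (intro cInf_lower bdd_belowI[of _ 0]) (force, auto simp: amopul1_obj_nonneg)
  have obj_le: "amopul1_obj C B r N A U
      \<le> (1 + spec_norm (C ** A ** mp_inverse C)) * (\<Sum>t=1..N-1. e t) + e N"
    if "\<forall>t\<in>{1..N}. norm (yhat C B x0 A U t - r t) \<le> e t" for A U e
    using \<open>N \<ge> 1\<close> \<open>r 0 = C *v x0\<close> that by (rule amopul1_obj_le_error_bounds)
  show ?thesis
  proof (intro conjI impI)
    assume "Z \<noteq> {}"
    then show "v \<le> (1 + Inf ((\<lambda>(A, U). spec_norm (C ** A ** mp_inverse C)) ` Z)) * (\<Sum>t=1..N-1. eps t) + eps N"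
    proof (rule le_affine_Inf)
      show "0 \<le> (\<Sum>t=1..N-1. eps t)"
        using \<open>\<forall>t\<in>{1..N}. eps t \<ge> 0\<close> by (intro sum_nonneg) auto
      fix z assume "z \<in> Z"
      then obtain A U where z: "z = (A, U)" and "(A, U) \<in> S"
        and err: "\<forall>t\<in>{1..N}. norm (yhat C B x0 A U t - r t) \<le> eps t"
        unfolding Z_def by blast
      have "v \<le> amopul1_obj C B r N A U" using v_le \<open>(A, U) \<in> S\<close> .
      also have "\<dots> \<le> (1 + spec_norm (C ** A ** mp_inverse C)) * (\<Sum>t=1..N-1. eps t) + eps N"
        using obj_le err .
      finally show "v \<le> (1 + (\<lambda>(A, U). spec_norm (C ** A ** mp_inverse C)) z) * (\<Sum>t=1..N-1. eps t) + eps N"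
        by (simp add: z)
    qed
  next
    assume "\<exists>(A, U)\<in>S. \<forall>t\<in>{1..N}. yhat C B x0 A U t = r t"
    then obtain A U where "(A, U) \<in> S" and exact: "\<forall>t\<in>{1..N}. yhat C B x0 A U t = r t" by auto
    have "amopul1_obj C B r N A U \<le> 0"
      using obj_le[of A U "\<lambda>_. 0"] exact by simp
    then have "amopul1_obj C B r N A U = 0" by (simp add: amopul1_obj_nonneg antisym)
    then show "v = 0" unfolding v_def using \<open>(A, U) \<in> S\<close>
      by (intro cInf_eq_minimum) (force, auto simp: amopul1_obj_nonneg)
  qed
qed

end
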